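(* Let $G$ be a finite group, let $\mathcal{H}$ be a finite-dimensional Hilbert space, and let $f: G \to U(\mathcal{H})$ be an arbitrary function (not necessarily a homomorphism). Then there exist a finite-dimensional Hilbert space $\mathcal{H}'$, an isometry $V: \mathcal{H} \to \mathcal{H}'$, and a unitary representation $\pi: G \to U(\mathcal{H}')$ of $G$ such that for every probability measure $\mu$ on $G$, every normalised density operator $\psi$ on $\mathcal{H}$, and every $\epsilon \ge 0$: \[ \mathbb{E}_{g \sim \mu,\, h \sim G} \| f(h) f(g) - f(hg) \|_\psi^2 \leq \epsilon \quad\Longrightarrow\quad \mathbb{E}_{g \sim \mu} \| f(g) - V^\dagger \pi(g) V \|_\psi^2 \leq \epsilon, \] where $h \sim G$ denotes a uniformly random element of $G$. (Note that $V$ and $\pi$ depend only on $f$, not on $\mu$, $\psi$ or $\epsilon$.)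
   Context: $U(\mathcal{H})$ denotes the set of unitary operators on $\mathcal{H}$. For a positive semidefinite operator $\psi$ on $\mathcal{H}$ and a linear operator $A$ on $\mathcal{H}$, the state-dependent (semi)norm is $\|A\|_\psi^2 := \mathrm{Tr}[A^\dagger A \psi]$. *)

theory Defs
  imports "Jordan_Normal_Form.Schur_Decomposition" "HOL-Algebra.Group"
begin

text \<open>Finite-dimensional Hilbert spaces are modelled as \<open>\<complex>^n\<close>; operators as complex matrices.
  \<open>mat_adjoint\<close> is the conjugate transpose.\<close>

definition unitary_mat :: "nat \<Rightarrow> complex mat \<Rightarrow> bool" where
  "unitary_mat n U \<longleftrightarrow> U \<in> carrier_mat n n \<and> mat_adjoint U * U = 1\<^sub>m n \<and> U * mat_adjoint U = 1\<^sub>m n"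

definition isometry_mat :: "nat \<Rightarrow> nat \<Rightarrow> complex mat \<Rightarrow> bool" where
  "isometry_mat n m V \<longleftrightarrow> V \<in> carrier_mat m n \<and> mat_adjoint V * V = 1\<^sub>m n"

definition psd_mat :: "nat \<Rightarrow> complex mat \<Rightarrow> bool" where
  "psd_mat n \<psi> \<longleftrightarrow> \<psi> \<in> carrier_mat n n \<and>
     (\<forall>v \<in> carrier_vec n. Im (conjugate v \<bullet> (\<psi> *\<^sub>v v)) = 0 \<and> Re (conjugate v \<bullet> (\<psi> *\<^sub>v v)) \<ge> 0)"

definition mat_trace :: "complex mat \<Rightarrow> complex" where
  "mat_trace A = (\<Sum>i < dim_row A. A $$ (i, i))"

definition density_op :: "nat \<Rightarrow> complex mat \<Rightarrow> bool" where
  "density_op n \<psi> \<longleftrightarrow> psd_mat n \<psi> \<and> mat_trace \<psi> = 1"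

text \<open>\<open>\<parallel>A\<parallel>_\<psi>^2 = Tr[A^\<dagger> A \<psi>]\<close> (real for psd \<psi>).\<close>
definition state_norm_sq :: "complex mat \<Rightarrow> complex mat \<Rightarrow> real" where
  "state_norm_sq A \<psi> = Re (mat_trace (mat_adjoint A * A * \<psi>))"

definition unitary_rep :: "('g, 'b) monoid_scheme \<Rightarrow> nat \<Rightarrow> ('g \<Rightarrow> complex mat) \<Rightarrow> bool" where
  "unitary_rep G m \<pi> \<longleftrightarrow> (\<forall>g \<in> carrier G. unitary_mat m (\<pi> g)) \<and>
     (\<forall>g \<in> carrier G. \<forall>h \<in> carrier G. \<pi> (g \<otimes>\<^bsub>G\<^esub> h) = \<pi> g * \<pi> h)"

definition prob_weights :: "('g, 'b) monoid_scheme \<Rightarrow> ('g \<Rightarrow> real) \<Rightarrow> bool" where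
  "prob_weights G \<mu> \<longleftrightarrow> (\<forall>g \<in> carrier G. \<mu> g \<ge> 0) \<and> (\<Sum>g \<in> carrier G. \<mu> g) = 1"

end

theory Submission
  imports Defs
begin

text \<open>Enumerate \<open>G\<close> as \<open>el 0, \<dots>, el (k - 1)\<close> and read \<open>\<complex>\<^sup>k\<^sup>n\<close> as \<open>\<complex>\<^sup>k \<otimes> \<complex>\<^sup>n\<close>.
  The isometry \<open>V v = (\<Sum>\<^sub>x e\<^sub>x \<otimes> f(x) v) / \<surd>k\<close> and the right regular representation
  \<open>\<pi> \<otimes> 1\<close> satisfy \<open>V\<^sup>\<dagger> \<pi>(g) V = (\<Sum>\<^sub>h f(h)\<^sup>\<dagger> f(hg)) / k\<close>, so by unitarity of the \<open>f(h)\<close>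
  \<open>f(g) - V\<^sup>\<dagger> \<pi>(g) V = (\<Sum>\<^sub>h f(h)\<^sup>\<dagger> (f(h) f(g) - f(hg))) / k\<close>.
  Convexity of \<open>\<parallel>\<cdot>\<parallel>\<^sub>\<psi>\<^sup>2\<close> and its invariance under left multiplication by unitaries then bound
  \<open>\<parallel>f(g) - V\<^sup>\<dagger> \<pi>(g) V\<parallel>\<^sub>\<psi>\<^sup>2\<close> by \<open>(\<Sum>\<^sub>h \<parallel>f(h) f(g) - f(hg)\<parallel>\<^sub>\<psi>\<^sup>2) / k\<close> for every single \<open>g\<close>,
  and averaging over \<open>g \<sim> \<mu>\<close> gives the theorem.\<close>

lemma sum_lessThan_mult_div_mod:
  "(\<Sum>p < k * n. F (p div n) (p mod n)) = (\<Sum>j < k. \<Sum>a < (n::nat). F j a :: 'a::comm_monoid_add)"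
proof -
  have "j * n + a < k * n" if "j < k" "a < n" for j a
  proof -
    have "j * n + a < Suc j * n" using that by simp
    also have "\<dots> \<le> k * n" using that by (intro mult_le_mono1) simp
    finally show ?thesis .
  qed
  then have "bij_betw (\<lambda>p. (p div n, p mod n)) {..< k * n} ({..<k} \<times> {..<n})"
    by (intro bij_betwI[where g = "\<lambda>(j, a). j * n + a"])
       (auto simp: less_mult_imp_div_less intro!: mod_less_divisor Nat.gr0I)
  then show ?thesis
    by (simp add: sum.reindex_bij_betw[symmetric] sum.cartesian_product)
qed

lemma mat_adjoint_eq: "mat_adjoint A = mat (dim_col A) (dim_row A) (\<lambda>(i, j). cnj (A $$ (j, i)))"
  by (rule eq_matI) (auto simp: mat_adjoint_def mat_of_rows_index)

lemma index_mat_adjoint [simp]: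
  "i < dim_col A \<Longrightarrow> j < dim_row A \<Longrightarrow> mat_adjoint A $$ (i, j) = cnj (A $$ (j, i))"
  by (simp add: mat_adjoint_eq)

lemma dim_mat_adjoint [simp]:
  "dim_row (mat_adjoint (A :: complex mat)) = dim_col A"
  "dim_col (mat_adjoint (A :: complex mat)) = dim_row A"
  by (simp_all add: mat_adjoint_eq)

lemma mat_adjoint_carrier_mat [simp]:
  "A \<in> carrier_mat a b \<Longrightarrow> mat_adjoint (A :: complex mat) \<in> carrier_mat b a"
  unfolding carrier_mat_def by simp

lemma mat_adjoint_mult:
  assumes "A \<in> carrier_mat a b" "B \<in> carrier_mat b c"
  shows "mat_adjoint (A * B) = mat_adjoint B * mat_adjoint (A :: complex mat)"
  by (rule eq_matI) (use assms in \<open>auto simp: scalar_prod_def cnj_sum mult.commute\<close>)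

lemma mat_adjoint_adjoint [simp]: "mat_adjoint (mat_adjoint (A :: complex mat)) = A"
  by (rule eq_matI) auto

text \<open>Working with entry functions avoids the dimension bookkeeping of sums of matrices.\<close>
definition trace_form ::
    "nat \<Rightarrow> (nat \<times> nat \<Rightarrow> complex) \<Rightarrow> (nat \<times> nat \<Rightarrow> complex) \<Rightarrow> complex mat \<Rightarrow> complex"
  where "trace_form n X Y \<psi> = (\<Sum>i<n. \<Sum>j<n. \<Sum>l<n. cnj (X (j, i)) * Y (j, l) * \<psi> $$ (l, i))"

lemma state_norm_sq_eq_trace_form:
  assumes "A \<in> carrier_mat n n" "\<psi> \<in> carrier_mat n n"
  shows "state_norm_sq A \<psi> = Re (trace_form n (($$) A) (($$) A) \<psi>)"
proof -
  have "mat_trace (mat_adjoint A * A * \<psi>) =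
      (\<Sum>i<n. \<Sum>l<n. \<Sum>j<n. cnj (A $$ (j, i)) * A $$ (j, l) * \<psi> $$ (l, i))"
    using assms unfolding mat_trace_def
    by (auto simp: scalar_prod_def sum_distrib_right lessThan_atLeast0 intro!: sum.cong)
  also have "\<dots> = trace_form n (($$) A) (($$) A) \<psi>"
    unfolding trace_form_def by (intro sum.cong refl sum.swap)
  finally show ?thesis unfolding state_norm_sq_def by simp
qed

lemma trace_form_nonneg:
  assumes "psd_mat n \<psi>"
  shows "0 \<le> Re (trace_form n X X \<psi>)"
proof -
  define v where "v j = vec n (\<lambda>i. cnj (X (j, i)))" for j
  have "trace_form n X X \<psi> = (\<Sum>j<n. \<Sum>l<n. \<Sum>i<n. cnj (X (j, i)) * X (j, l) * \<psi> $$ (l, i))"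
    unfolding trace_form_def by (subst sum.swap) (intro sum.cong refl sum.swap)
  also have "\<dots> = (\<Sum>j<n. conjugate (v j) \<bullet> (\<psi> *\<^sub>v v j))"
    using assms unfolding psd_mat_def v_def
    by (auto simp: scalar_prod_def sum_distrib_left lessThan_atLeast0 mult_ac intro!: sum.cong)
  finally show ?thesis
    using assms unfolding psd_mat_def v_def by (auto simp: Re_sum intro!: sum_nonneg)
qed

lemma trace_form_cong:
  "(\<And>j i. j < n \<Longrightarrow> i < n \<Longrightarrow> X (j, i) = X' (j, i)) \<Longrightarrow>
   (\<And>j i. j < n \<Longrightarrow> i < n \<Longrightarrow> Y (j, i) = Y' (j, i)) \<Longrightarrow>
   trace_form n X Y \<psi> = trace_form n X' Y' \<psi>"
  unfolding trace_form_def by (intro sum.cong refl) auto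

lemma trace_form_sum_left:
  "trace_form n (\<lambda>x. \<Sum>h\<in>S. X h x) Y \<psi> = (\<Sum>h\<in>S. trace_form n (X h) Y \<psi>)"
  by (cases "finite S") (simp_all add: trace_form_def sum_distrib_right sum_distrib_left cnj_sum
    flip: sum.swap[of _ S])

lemma trace_form_sum_right:
  "trace_form n X (\<lambda>x. \<Sum>h\<in>S. Y h x) \<psi> = (\<Sum>h\<in>S. trace_form n X (Y h) \<psi>)"
  by (cases "finite S") (simp_all add: trace_form_def sum_distrib_right sum_distrib_left
    flip: sum.swap[of _ S])

lemma trace_form_diff:
  "trace_form n (\<lambda>x. X x - Y x) (\<lambda>x. X x - Y x) \<psi> =
   trace_form n X X \<psi> + trace_form n Y Y \<psi> - trace_form n X Y \<psi> - trace_form n Y X \<psi>"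
  by (simp add: trace_form_def sum_subtractf sum.distrib algebra_simps)

lemma trace_form_scale:
  "trace_form n (\<lambda>x. c * X x) (\<lambda>x. c * X x) \<psi> = cnj c * c * trace_form n X X \<psi>"
  by (simp add: trace_form_def sum_distrib_left mult_ac)

text \<open>Expand \<open>0 \<le> \<Sum>\<^sub>h\<^sub>,\<^sub>h\<^sub>' \<parallel>X\<^sub>h - X\<^sub>h\<^sub>'\<parallel>\<^sup>2\<close>.\<close>
lemma trace_form_sum_le:
  assumes "finite S" "psd_mat n \<psi>"
  shows "Re (trace_form n (\<lambda>x. \<Sum>h\<in>S. X h x) (\<lambda>x. \<Sum>h\<in>S. X h x) \<psi>)
     \<le> real (card S) * (\<Sum>h\<in>S. Re (trace_form n (X h) (X h) \<psi>))"
proof -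
  define B where "B h h' = Re (trace_form n (X h) (X h') \<psi>)" for h h'
  have "0 \<le> (\<Sum>h\<in>S. \<Sum>h'\<in>S. Re (trace_form n (\<lambda>x. X h x - X h' x) (\<lambda>x. X h x - X h' x) \<psi>))"
    by (intro sum_nonneg trace_form_nonneg assms)
  also have "\<dots> = (\<Sum>h\<in>S. \<Sum>h'\<in>S. B h h) + (\<Sum>h\<in>S. \<Sum>h'\<in>S. B h' h')
      - (\<Sum>h\<in>S. \<Sum>h'\<in>S. B h h') - (\<Sum>h\<in>S. \<Sum>h'\<in>S. B h' h)"
    by (simp add: trace_form_diff B_def sum.distrib sum_subtractf)
  also have "\<dots> = 2 * real (card S) * (\<Sum>h\<in>S. B h h) - 2 * (\<Sum>h\<in>S. \<Sum>h'\<in>S. B h h')"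
  proof -
    have "(\<Sum>h\<in>S. \<Sum>h'\<in>S. B h' h) = (\<Sum>h\<in>S. \<Sum>h'\<in>S. B h h')"
      by (rule sum.swap)
    moreover have "(\<Sum>h\<in>S. \<Sum>h'\<in>S. B h' h') = (\<Sum>h\<in>S. \<Sum>h'\<in>S. B h h)"
      by (rule sum.swap)
    ultimately show ?thesis by (simp add: sum_distrib_right)
  qed
  also have "(\<Sum>h\<in>S. \<Sum>h'\<in>S. B h h') = Re (trace_form n (\<lambda>x. \<Sum>h\<in>S. X h x) (\<lambda>x. \<Sum>h\<in>S. X h x) \<psi>)"
    by (simp add: B_def trace_form_sum_left trace_form_sum_right Re_sum)
  finally show ?thesis by (simp add: B_def)
qed

lemma state_norm_sq_adjoint_unitary_mult:
  assumes "unitary_mat n U" "D \<in> carrier_mat n n"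
  shows "state_norm_sq (mat_adjoint U * D) \<psi> = state_norm_sq D \<psi>"
proof -
  have U: "U \<in> carrier_mat n n" "U * mat_adjoint U = 1\<^sub>m n"
    using assms(1) unfolding unitary_mat_def by simp_all
  have "mat_adjoint (mat_adjoint U * D) * (mat_adjoint U * D) =
      mat_adjoint D * U * (mat_adjoint U * D)"
    using U assms(2) by (simp add: mat_adjoint_mult[of _ n n _ n])
  also have "\<dots> = mat_adjoint D * (U * (mat_adjoint U * D))"
    using U assms(2) by (intro assoc_mult_mat[of _ n n _ n _ n]) auto
  also have "\<dots> = mat_adjoint D * ((U * mat_adjoint U) * D)"
    using U assms(2) by (subst assoc_mult_mat[of _ n n _ n _ n]) auto
  also have "\<dots> = mat_adjoint D * D"
    using U assms(2) by simp
  finally show ?thesis unfolding state_norm_sq_def by simp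
qed

lemma mat_adjoint_smult: "mat_adjoint (c \<cdot>\<^sub>m A) = cnj c \<cdot>\<^sub>m mat_adjoint (A :: complex mat)"
  by (rule eq_matI) auto

lemma adjoint_isometry_mult_defect:
  assumes "isometry_mat n n U" "A \<in> carrier_mat n n" "B \<in> carrier_mat n n"
  shows "mat_adjoint U * (U * A - B) = A - mat_adjoint U * B"
proof -
  have U: "U \<in> carrier_mat n n" "mat_adjoint U * U = 1\<^sub>m n"
    using assms(1) unfolding isometry_mat_def by auto
  have "mat_adjoint U * (U * A - B) = mat_adjoint U * (U * A) - mat_adjoint U * B"
    using U assms(2,3) by (intro mult_minus_distrib_mat[of _ n n]) auto
  also have "mat_adjoint U * (U * A) = (mat_adjoint U * U) * A"
    using U assms(2) by (intro assoc_mult_mat[symmetric, of _ n n _ n _ n]) auto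
  finally show ?thesis
    using U assms(2) by simp
qed

definition block_column :: "nat \<Rightarrow> nat \<Rightarrow> (nat \<Rightarrow> complex mat) \<Rightarrow> complex mat" where
  "block_column k n F = mat (k * n) n (\<lambda>(p, b). F (p div n) $$ (p mod n, b))"

lemma block_column_carrier_mat [simp]: "block_column k n F \<in> carrier_mat (k * n) n"
  by (simp add: block_column_def)

lemma block_column_cong:
  "(\<And>j. j < k \<Longrightarrow> F j = F' j) \<Longrightarrow> block_column k n F = block_column k n F'"
  unfolding block_column_def by (rule cong_mat) (auto simp: less_mult_imp_div_less)

lemma block_column_adjoint_mult_index:
  assumes "\<And>j. j < k \<Longrightarrow> F j \<in> carrier_mat n n" "\<And>j. j < k \<Longrightarrow> F' j \<in> carrier_mat n n"
    and "b < n" "b' < n"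
  shows "(mat_adjoint (block_column k n F) * block_column k n F') $$ (b, b') =
    (\<Sum>j<k. (mat_adjoint (F j) * F' j) $$ (b, b'))"
proof -
  have "(mat_adjoint (block_column k n F) * block_column k n F') $$ (b, b') =
      (\<Sum>p < k * n. cnj (F (p div n) $$ (p mod n, b)) * F' (p div n) $$ (p mod n, b'))"
    using assms(3,4) by (simp add: block_column_def scalar_prod_def lessThan_atLeast0)
  also have "\<dots> = (\<Sum>j<k. \<Sum>a<n. cnj (F j $$ (a, b)) * F' j $$ (a, b'))"
    by (rule sum_lessThan_mult_div_mod)
  also have "\<dots> = (\<Sum>j<k. (mat_adjoint (F j) * F' j) $$ (b, b'))"
  proof (intro sum.cong refl)
    fix j assume "j \<in> {..<k}"
    then have "F j \<in> carrier_mat n n" "F' j \<in> carrier_mat n n" using assms(1,2) by auto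
    with assms(3,4) show "(\<Sum>a<n. cnj (F j $$ (a, b)) * F' j $$ (a, b')) =
        (mat_adjoint (F j) * F' j) $$ (b, b')"
      by (simp add: scalar_prod_def lessThan_atLeast0)
  qed
  finally show ?thesis .
qed

locale enumerated_group = group G for G :: "('g, 'b) monoid_scheme" (structure) +
  fixes el :: "nat \<Rightarrow> 'g" and k :: nat
  assumes bij_el: "bij_betw el {..<k} (carrier G)"
begin

definition index_of :: "'g \<Rightarrow> nat" where
  "index_of x = inv_into {..<k} el x"

lemma index_of_less: "x \<in> carrier G \<Longrightarrow> index_of x < k"
  unfolding index_of_def using bij_el by (metis bij_betw_def inv_into_into lessThan_iff)

lemma el_index_of [simp]: "x \<in> carrier G \<Longrightarrow> el (index_of x) = x"
  unfolding index_of_def using bij_el by (simp add: bij_betw_inv_into_right)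

lemma index_of_el [simp]: "j < k \<Longrightarrow> index_of (el j) = j"
  unfolding index_of_def using bij_el by (simp add: bij_betw_inv_into_left)

lemma el_closed [intro, simp]: "j < k \<Longrightarrow> el j \<in> carrier G"
  using bij_el by (auto dest: bij_betwE)

lemma card_carrier: "card (carrier G) = k"
  using bij_betw_same_card[OF bij_el] by simp

lemma k_gt_0: "0 < k"
  using index_of_less one_closed by fastforce

lemma sum_enumeration: "(\<Sum>j<k. F (el j)) = (\<Sum>h\<in>carrier G. F h)"
  using sum.reindex_bij_betw[OF bij_el, of F] by simp

text \<open>Right translation by \<open>g\<close> on the \<open>k\<close> blocks of size \<open>n\<close> of \<open>{..<k * n}\<close>.\<close>
definition block_shift :: "nat \<Rightarrow> 'g \<Rightarrow> nat \<Rightarrow> nat" where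
  "block_shift n g p = index_of (el (p div n) \<otimes> g) * n + p mod n"

lemma block_index_less:
  assumes "p < k * n"
  shows "p div n < k" "p mod n < n"
proof -
  have "0 < n" using assms by (cases n) auto
  then show "p mod n < n" by simp
  show "p div n < k" using assms by (metis less_mult_imp_div_less)
qed

lemma block_shift_div_mod:
  assumes "g \<in> carrier G" "p < k * n"
  shows "block_shift n g p div n = index_of (el (p div n) \<otimes> g)"
    and "block_shift n g p mod n = p mod n"
  using block_index_less[OF assms(2)] by (simp_all add: block_shift_def)

lemma block_shift_less:
  assumes "g \<in> carrier G" "p < k * n"
  shows "block_shift n g p < k * n"
proof -
  have "index_of (el (p div n) \<otimes> g) < k"
    using assms block_index_less[OF assms(2)] by (intro index_of_less) auto
  then have "Suc (index_of (el (p div n) \<otimes> g)) * n \<le> k * n"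
    by (intro mult_le_mono1) simp
  then show ?thesis
    using block_index_less[OF assms(2)] by (simp add: block_shift_def)
qed

lemma block_shift_mult:
  assumes "g \<in> carrier G" "h \<in> carrier G" "p < k * n"
  shows "block_shift n h (block_shift n g p) = block_shift n (g \<otimes> h) p"
  using assms block_index_less[OF assms(3)]
  by (simp add: block_shift_def block_shift_div_mod m_assoc)

lemma block_shift_one: "p < k * n \<Longrightarrow> block_shift n \<one> p = p"
  using block_index_less[of p n] by (simp add: block_shift_def)

text \<open>The right regular representation of \<open>G\<close> tensored with the identity of \<open>\<complex>\<^sup>n\<close>.\<close>
definition regular_rep :: "nat \<Rightarrow> 'g \<Rightarrow> complex mat" where
  "regular_rep n g = mat (k * n) (k * n) (\<lambda>(p, q). if q = block_shift n g p then 1 else 0)"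

lemma regular_rep_carrier_mat [simp]: "regular_rep n g \<in> carrier_mat (k * n) (k * n)"
  by (simp add: regular_rep_def)

lemma regular_rep_mult:
  assumes "g \<in> carrier G" "h \<in> carrier G"
  shows "regular_rep n (g \<otimes> h) = regular_rep n g * regular_rep n h"
proof (rule eq_matI)
  fix p q
  assume "p < dim_row (regular_rep n g * regular_rep n h)"
    and "q < dim_col (regular_rep n g * regular_rep n h)"
  then have p: "p < k * n" and q: "q < k * n" by (auto simp: regular_rep_def)
  have "(regular_rep n g * regular_rep n h) $$ (p, q) =
      (\<Sum>r < k * n. (if r = block_shift n g p then 1 else 0) *
        (if q = block_shift n h r then 1 else 0))"
    using p q by (simp add: regular_rep_def scalar_prod_def lessThan_atLeast0)
  also have "\<dots> = regular_rep n (g \<otimes> h) $$ (p, q)"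
    using p q assms block_shift_less[OF assms(1) p]
    by (simp add: regular_rep_def block_shift_mult if_distrib[of "\<lambda>x. x * _"] cong: if_cong)
  finally show "regular_rep n (g \<otimes> h) $$ (p, q) = (regular_rep n g * regular_rep n h) $$ (p, q)" ..
qed (auto simp: regular_rep_def)

lemma regular_rep_one: "regular_rep n \<one> = 1\<^sub>m (k * n)"
  by (rule eq_matI) (auto simp: regular_rep_def block_shift_one)

lemma mat_adjoint_regular_rep:
  assumes "g \<in> carrier G"
  shows "mat_adjoint (regular_rep n g) = regular_rep n (inv g)"
proof (rule eq_matI)
  fix p q assume "p < dim_row (regular_rep n (inv g))" "q < dim_col (regular_rep n (inv g))"
  then have p: "p < k * n" and q: "q < k * n" by (auto simp: regular_rep_def)
  have "p = block_shift n g q \<longleftrightarrow> q = block_shift n (inv g) p"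
    using assms p q block_shift_mult[of g "inv g" q n] block_shift_mult[of "inv g" g p n]
    by (auto simp: block_shift_one)
  then show "mat_adjoint (regular_rep n g) $$ (p, q) = regular_rep n (inv g) $$ (p, q)"
    using p q by (simp add: regular_rep_def)
qed (auto simp: regular_rep_def)

lemma unitary_rep_regular_rep: "unitary_rep G (k * n) (regular_rep n)"
  unfolding unitary_rep_def unitary_mat_def
  by (simp add: regular_rep_mult mat_adjoint_regular_rep regular_rep_one flip: regular_rep_mult)

lemma regular_rep_mult_block_column:
  assumes "g \<in> carrier G"
  shows "regular_rep n g * block_column k n F = block_column k n (\<lambda>j. F (index_of (el j \<otimes> g)))"
proof (rule eq_matI)
  fix p b assume "p < dim_row (block_column k n (\<lambda>j. F (index_of (el j \<otimes> g))))"
    "b < dim_col (block_column k n (\<lambda>j. F (index_of (el j \<otimes> g))))"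
  then have p: "p < k * n" and b: "b < n" by (auto simp: block_column_def)
  have "(regular_rep n g * block_column k n F) $$ (p, b) =
      (\<Sum>r < k * n. (if r = block_shift n g p then 1 else 0) * block_column k n F $$ (r, b))"
    using p b by (simp add: regular_rep_def block_column_def scalar_prod_def lessThan_atLeast0)
  also have "\<dots> = block_column k n F $$ (block_shift n g p, b)"
    using block_shift_less[OF assms p] by (simp add: if_distrib[of "\<lambda>x. x * _"] cong: if_cong)
  also have "\<dots> = block_column k n (\<lambda>j. F (index_of (el j \<otimes> g))) $$ (p, b)"
    using block_shift_less[OF assms p] block_index_less[OF p] assms b p
    by (simp add: block_column_def block_shift_div_mod)
  finally show "(regular_rep n g * block_column k n F) $$ (p, b) =
      block_column k n (\<lambda>j. F (index_of (el j \<otimes> g))) $$ (p, b)" .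
qed (auto simp: regular_rep_def block_column_def)

definition dilation :: "nat \<Rightarrow> ('g \<Rightarrow> complex mat) \<Rightarrow> complex mat" where
  "dilation n f = block_column k n (\<lambda>j. complex_of_real (1 / sqrt (real k)) \<cdot>\<^sub>m f (el j))"

lemma dilation_carrier_mat [simp]: "dilation n f \<in> carrier_mat (k * n) n"
  by (simp add: dilation_def)

lemma dim_dilation [simp]: "dim_row (dilation n f) = k * n" "dim_col (dilation n f) = n"
  by (simp_all add: dilation_def block_column_def)

lemma compression_regular_rep_index:
  assumes f: "\<And>h. h \<in> carrier G \<Longrightarrow> f h \<in> carrier_mat n n"
    and g: "g \<in> carrier G" and "b < n" "b' < n"
  shows "(mat_adjoint (dilation n f) * regular_rep n g * dilation n f) $$ (b, b') =
    (\<Sum>h\<in>carrier G. (mat_adjoint (f h) * f (h \<otimes> g)) $$ (b, b')) / of_nat k"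
proof -
  define c where "c = complex_of_real (1 / sqrt (real k))"
  have c: "cnj c * c = 1 / of_nat k"
    using k_gt_0 by (simp add: c_def flip: of_real_mult)
  have "mat_adjoint (dilation n f) * regular_rep n g * dilation n f =
      mat_adjoint (dilation n f) * (regular_rep n g * dilation n f)"
    by (intro assoc_mult_mat[of _ n "k * n" _ "k * n" _ n]) simp_all
  also have "regular_rep n g * dilation n f = block_column k n (\<lambda>j. c \<cdot>\<^sub>m f (el j \<otimes> g))"
    using g
    by (auto simp: dilation_def c_def regular_rep_mult_block_column intro: block_column_cong)
  also have "(mat_adjoint (dilation n f) * \<dots>) $$ (b, b') =
      (\<Sum>j<k. (mat_adjoint (c \<cdot>\<^sub>m f (el j)) * (c \<cdot>\<^sub>m f (el j \<otimes> g))) $$ (b, b'))"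
    unfolding dilation_def c_def[symmetric] using assms
    by (intro block_column_adjoint_mult_index) auto
  also have "\<dots> = (\<Sum>j<k. cnj c * c * (mat_adjoint (f (el j)) * f (el j \<otimes> g)) $$ (b, b'))"
  proof (intro sum.cong refl)
    fix j assume "j \<in> {..<k}"
    then have "f (el j) \<in> carrier_mat n n" "f (el j \<otimes> g) \<in> carrier_mat n n"
      using f g by auto
    with assms(3,4) show "(mat_adjoint (c \<cdot>\<^sub>m f (el j)) * (c \<cdot>\<^sub>m f (el j \<otimes> g))) $$ (b, b') =
        cnj c * c * (mat_adjoint (f (el j)) * f (el j \<otimes> g)) $$ (b, b')"
      by (simp add: mat_adjoint_smult mult_smult_assoc_mat[of _ n n _ n]
          mult_smult_distrib[of _ n n _ n])
  qed
  finally show ?thesis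
    by (simp add: c sum_enumeration[of "\<lambda>h. (mat_adjoint (f h) * f (h \<otimes> g)) $$ (b, b')"]
        sum_distrib_left flip: sum_divide_distrib)
qed

lemma dilation_isometry:
  assumes "\<And>h. h \<in> carrier G \<Longrightarrow> isometry_mat n n (f h)"
  shows "isometry_mat n (k * n) (dilation n f)"
proof -
  have f: "f h \<in> carrier_mat n n" "mat_adjoint (f h) * f h = 1\<^sub>m n" if "h \<in> carrier G" for h
    using assms[OF that] unfolding isometry_mat_def by auto
  have V: "dilation n f \<in> carrier_mat (k * n) n"
    by simp
  have "mat_adjoint (dilation n f) * dilation n f =
      mat_adjoint (dilation n f) * regular_rep n \<one> * dilation n f"
    using right_mult_one_mat[OF mat_adjoint_carrier_mat[OF V]] by (simp add: regular_rep_one)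
  also have "\<dots> = 1\<^sub>m n"
  proof (rule eq_matI)
    fix b b' assume "b < dim_row (1\<^sub>m n)" "b' < dim_col (1\<^sub>m n)"
    then show "(mat_adjoint (dilation n f) * regular_rep n \<one> * dilation n f) $$ (b, b') =
        1\<^sub>m n $$ (b, b')"
      using f k_gt_0 by (subst compression_regular_rep_index) (simp_all add: card_carrier)
  qed simp_all
  finally show ?thesis
    unfolding isometry_mat_def using V by simp
qed

lemma dilation_defect_index:
  assumes f: "\<And>h. h \<in> carrier G \<Longrightarrow> unitary_mat n (f h)"
    and g: "g \<in> carrier G" and "j < n" "i < n"
  shows "(f g - mat_adjoint (dilation n f) * regular_rep n g * dilation n f) $$ (j, i) =
    (\<Sum>h\<in>carrier G. (mat_adjoint (f h) * (f h * f g - f (h \<otimes> g))) $$ (j, i)) / of_nat k"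
proof -
  have fc: "f h \<in> carrier_mat n n" if "h \<in> carrier G" for h
    using f[OF that] unfolding unitary_mat_def by simp
  define S where "S = (\<Sum>h\<in>carrier G. (mat_adjoint (f h) * f (h \<otimes> g)) $$ (j, i))"
  have "(\<Sum>h\<in>carrier G. (mat_adjoint (f h) * (f h * f g - f (h \<otimes> g))) $$ (j, i)) =
      (\<Sum>h\<in>carrier G. f g $$ (j, i) - (mat_adjoint (f h) * f (h \<otimes> g)) $$ (j, i))"
  proof (intro sum.cong refl)
    fix h assume h: "h \<in> carrier G"
    have "isometry_mat n n (f h)"
      using f[OF h] unfolding unitary_mat_def isometry_mat_def by simp
    then have "mat_adjoint (f h) * (f h * f g - f (h \<otimes> g)) = f g - mat_adjoint (f h) * f (h \<otimes> g)"
      using fc[OF g] fc[OF m_closed[OF h g]] by (rule adjoint_isometry_mult_defect)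
    then show "(mat_adjoint (f h) * (f h * f g - f (h \<otimes> g))) $$ (j, i) =
        f g $$ (j, i) - (mat_adjoint (f h) * f (h \<otimes> g)) $$ (j, i)"
      using assms(3,4) fc[OF g] fc[OF h] fc[OF m_closed[OF h g]] by simp
  qed
  also have "\<dots> = of_nat k * (f g $$ (j, i) - S / of_nat k)"
    using k_gt_0 by (simp add: S_def sum_subtractf card_carrier field_simps)
  also have "S / of_nat k = (mat_adjoint (dilation n f) * regular_rep n g * dilation n f) $$ (j, i)"
    unfolding S_def by (rule compression_regular_rep_index[OF fc g assms(3,4), symmetric])
  also have "f g $$ (j, i) - \<dots> =
      (f g - mat_adjoint (dilation n f) * regular_rep n g * dilation n f) $$ (j, i)"
    using assms(3,4) by (intro index_minus_mat(1)[symmetric]) simp_all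
  finally show ?thesis
    using k_gt_0 by simp
qed

lemma state_norm_sq_dilation_defect_le:
  assumes f: "\<And>h. h \<in> carrier G \<Longrightarrow> unitary_mat n (f h)"
    and g: "g \<in> carrier G" and psd: "psd_mat n \<psi>"
  shows "state_norm_sq (f g - mat_adjoint (dilation n f) * regular_rep n g * dilation n f) \<psi> \<le>
    (\<Sum>h\<in>carrier G. state_norm_sq (f h * f g - f (h \<otimes> g)) \<psi>) / real k"
proof -
  have fc: "f h \<in> carrier_mat n n" if "h \<in> carrier G" for h
    using f[OF that] unfolding unitary_mat_def by simp
  have \<psi>c: "\<psi> \<in> carrier_mat n n"
    using psd unfolding psd_mat_def by simp
  define E where "E = f g - mat_adjoint (dilation n f) * regular_rep n g * dilation n f"
  define D where "D h = f h * f g - f (h \<otimes> g)" for h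
  define Y where "Y h = mat_adjoint (f h) * D h" for h
  have Dc: "D h \<in> carrier_mat n n" if "h \<in> carrier G" for h
    unfolding D_def using fc[OF m_closed[OF that g]] by (rule minus_carrier_mat)
  have Yc: "Y h \<in> carrier_mat n n" if "h \<in> carrier G" for h
    unfolding Y_def using mat_adjoint_carrier_mat[OF fc[OF that]] Dc[OF that]
    by (rule mult_carrier_mat)
  have "state_norm_sq E \<psi> = Re (trace_form n (($$) E) (($$) E) \<psi>)"
    using \<psi>c unfolding E_def
    by (intro state_norm_sq_eq_trace_form minus_carrier_mat mult_carrier_mat[of _ n "k * n"])
      simp_all
  also have "\<dots> = Re (trace_form n (\<lambda>x. of_real (1 / real k) * (\<Sum>h\<in>carrier G. Y h $$ x))
      (\<lambda>x. of_real (1 / real k) * (\<Sum>h\<in>carrier G. Y h $$ x)) \<psi>)"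
  proof -
    have "E $$ (j, i) = of_real (1 / real k) * (\<Sum>h\<in>carrier G. Y h $$ (j, i))"
      if "j < n" "i < n" for j i
      using dilation_defect_index[OF f g that] unfolding E_def Y_def D_def by simp
    then show ?thesis
      by (intro arg_cong[where f = Re] trace_form_cong) simp_all
  qed
  also have "\<dots> = Re (trace_form n (\<lambda>x. \<Sum>h\<in>carrier G. Y h $$ x) (\<lambda>x. \<Sum>h\<in>carrier G. Y h $$ x) \<psi>)
      / real k ^ 2"
    unfolding trace_form_scale by (simp add: power2_eq_square flip: of_real_mult)
  also have "\<dots> \<le>
      real k * (\<Sum>h\<in>carrier G. Re (trace_form n (($$) (Y h)) (($$) (Y h)) \<psi>)) / real k ^ 2"
    using trace_form_sum_le[OF _ psd, of "carrier G" "\<lambda>h. ($$) (Y h)"] bij_betw_finite[OF bij_el]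
    by (simp add: card_carrier divide_right_mono)
  also have "\<dots> = (\<Sum>h\<in>carrier G. state_norm_sq (Y h) \<psi>) / real k"
    using k_gt_0 state_norm_sq_eq_trace_form[OF Yc \<psi>c] by (simp add: power2_eq_square)
  also have "\<dots> = (\<Sum>h\<in>carrier G. state_norm_sq (D h) \<psi>) / real k"
    using state_norm_sq_adjoint_unitary_mult[OF f Dc] by (simp add: Y_def)
  finally show ?thesis
    by (simp add: E_def D_def)
qed

end

theorem theorem3p1:
  fixes G :: "('g, 'b) monoid_scheme" and n :: nat and f :: "'g \<Rightarrow> complex mat"
  assumes "group G" and "finite (carrier G)"
    and "\<forall>g \<in> carrier G. unitary_mat n (f g)"
  shows "\<exists>m V \<pi>. isometry_mat n m V \<and> unitary_rep G m \<pi> \<and>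
    (\<forall>\<mu> \<psi> (\<epsilon>::real). prob_weights G \<mu> \<longrightarrow> density_op n \<psi> \<longrightarrow> \<epsilon> \<ge> 0 \<longrightarrow>
      (\<Sum>g \<in> carrier G. \<mu> g * ((1 / real (card (carrier G))) *
          (\<Sum>h \<in> carrier G. state_norm_sq (f h * f g - f (h \<otimes>\<^bsub>G\<^esub> g)) \<psi>))) \<le> \<epsilon> \<longrightarrow>
      (\<Sum>g \<in> carrier G. \<mu> g * state_norm_sq (f g - mat_adjoint V * \<pi> g * V) \<psi>) \<le> \<epsilon>)"
proof -
  let ?k = "card (carrier G)"
  obtain el where "bij_betw el {..<?k} (carrier G)"
    using ex_bij_betw_nat_finite[OF assms(2)] by (auto simp: lessThan_atLeast0)
  then interpret enumerated_group G el ?k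
    using assms(1) by (simp add: enumerated_group_def enumerated_group_axioms_def)
  have f: "\<And>g. g \<in> carrier G \<Longrightarrow> unitary_mat n (f g)"
    using assms(3) by simp
  have "(\<Sum>g\<in>carrier G. \<mu> g *
          state_norm_sq (f g - mat_adjoint (dilation n f) * regular_rep n g * dilation n f) \<psi>)
      \<le> (\<Sum>g\<in>carrier G. \<mu> g * ((1 / real ?k) *
          (\<Sum>h\<in>carrier G. state_norm_sq (f h * f g - f (h \<otimes>\<^bsub>G\<^esub> g)) \<psi>)))"
    if "prob_weights G \<mu>" "density_op n \<psi>" for \<mu> \<psi>
    using that state_norm_sq_dilation_defect_le[OF f]
    by (intro sum_mono mult_left_mono) (auto simp: prob_weights_def density_op_def)
  moreover have "isometry_mat n (?k * n) (dilation n f)"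
    using f by (intro dilation_isometry) (simp add: unitary_mat_def isometry_mat_def)
  ultimately show ?thesis
    using unitary_rep_regular_rep
    by (intro exI[of _ "?k * n"] exI[of _ "dilation n f"] exI[of _ "regular_rep n"] conjI allI impI)
      (auto intro: order_trans)
qed

end
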